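(* Let $S$ be a numerical semigroup minimally generated by $n_1<\cdots<n_e$, with conductor $c$, and let $m\ge 2c-1$. Let $M$ and $N$ be $(S,m,r)$-amenable sets with shadows $L_M$ and $L_N$ respectively. If $L_M\subseteq L_N$, then $\sharp\mathrm D(M)\le\sharp\mathrm D(N)$.
   Context: A numerical semigroup is a submonoid of $\mathbb N$ with finite complement; its conductor $c$ is the least element of $S$ such that $c+n\in S$ for all $n\in\mathbb N$. For $x\in S$, $\mathrm D(x)=\{\alpha\in S\mid x-\alpha\in S\}$ and for $A\subseteq S$, $\mathrm D(A)=\bigcup_{x\in A}\mathrm D(x)$. A set $M=\{m_1<\cdots<m_r\}\subseteq S$ with $2c-1\le m=m_1$ is $(S,m,r)$-amenable if $\mathrm D(m_i)\cap[m,\infty)\subseteq M$ for all $i$. The ground is $\{m,\ldots,m+n_e-1\}$ and the shadow of an amenable set $M$ is $M\cap\{m,\ldots,m+n_e-1\}$. *)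

theory Defs
  imports Main
begin

definition numerical_semigroup :: "nat set \<Rightarrow> bool" where
  "numerical_semigroup S \<longleftrightarrow> 0 \<in> S \<and> (\<forall>x\<in>S. \<forall>y\<in>S. x + y \<in> S) \<and> finite (UNIV - S)"

definition minimal_generators :: "nat set \<Rightarrow> nat set" where
  "minimal_generators S = {x \<in> S. x \<noteq> 0 \<and>
      \<not> (\<exists>a\<in>S. \<exists>b\<in>S. a \<noteq> 0 \<and> b \<noteq> 0 \<and> a + b = x)}"

definition conductor :: "nat set \<Rightarrow> nat" where
  "conductor S = (LEAST c. c \<in> S \<and> (\<forall>n. c + n \<in> S))"

definition Dx :: "nat set \<Rightarrow> nat \<Rightarrow> nat set" where
  "Dx S x = {a \<in> S. a \<le> x \<and> x - a \<in> S}"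

definition DA :: "nat set \<Rightarrow> nat set \<Rightarrow> nat set" where
  "DA S A = (\<Union>x\<in>A. Dx S x)"

definition amenable :: "nat set \<Rightarrow> nat \<Rightarrow> nat \<Rightarrow> nat set \<Rightarrow> bool" where
  "amenable S m r M \<longleftrightarrow> finite M \<and> M \<noteq> {} \<and> card M = r \<and> M \<subseteq> S \<and>
     Min M = m \<and> 2 * conductor S - 1 \<le> m \<and>
     (\<forall>x\<in>M. Dx S x \<inter> {m..} \<subseteq> M)"

definition shadow :: "nat set \<Rightarrow> nat \<Rightarrow> nat set \<Rightarrow> nat set" where
  "shadow S m M = M \<inter> {m..<m + Max (minimal_generators S)}"

end

theory Submission
  imports Defs
begin

text \<open>Since \<open>D(M) \<inter> [m,\<infinity>) \<subseteq> M \<subseteq> D(M)\<close>, the set \<open>D(M)\<close> is the disjoint union of \<open>M\<close>,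
  of size \<open>r\<close>, and its part below \<open>m\<close>. That part depends only on the shadow: if \<open>a < m\<close>
  divides some \<open>x \<in> M\<close> beyond the ground, pick a minimal generator \<open>g\<close> dividing \<open>x - a\<close>;
  then \<open>x - g \<ge> m \<ge> c\<close>, so \<open>x - g \<in> D(x) \<inter> [m,\<infinity>) \<subseteq> M\<close> and \<open>a\<close> still divides \<open>x - g\<close>.
  Descending this way, \<open>a\<close> divides an element of the shadow. Hence
  \<open>#D(M) = r + #(D(L\<^sub>M) \<inter> [0,m))\<close>, which is monotone in the shadow.\<close>

lemma numerical_semigroup_add:
  "numerical_semigroup S \<Longrightarrow> x \<in> S \<Longrightarrow> y \<in> S \<Longrightarrow> x + y \<in> S"
  by (simp add: numerical_semigroup_def)

lemma minimal_generator_le: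
  assumes ns: "numerical_semigroup S"
  shows "b \<in> S \<Longrightarrow> b \<noteq> 0 \<Longrightarrow> \<exists>g\<in>minimal_generators S. g \<le> b \<and> b - g \<in> S"
proof (induction b rule: less_induct)
  case (less b)
  show ?case
  proof (cases "b \<in> minimal_generators S")
    case True
    then show ?thesis using ns by (auto simp: numerical_semigroup_def)
  next
    case False
    then obtain a1 a2 where a: "a1 \<in> S" "a2 \<in> S" "a1 \<noteq> 0" "a2 \<noteq> 0" "a1 + a2 = b"
      using less.prems unfolding minimal_generators_def by auto
    then obtain g where g: "g \<in> minimal_generators S" "g \<le> a1" "a1 - g \<in> S"
      using less.IH[of a1] by auto
    have "b - g = (a1 - g) + a2" using a g by auto
    then have "b - g \<in> S" using numerical_semigroup_add[OF ns g(3) a(2)] by simp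
    moreover have "g \<le> b" using g a by simp
    ultimately show ?thesis using g(1) by blast
  qed
qed

lemma conductor_le_imp_mem:
  assumes ns: "numerical_semigroup S" and "conductor S \<le> x"
  shows "x \<in> S"
proof -
  have "finite (UNIV - S)" using ns by (simp add: numerical_semigroup_def)
  then obtain k where k: "\<forall>y\<in>UNIV - S. y < k"
    by (metis finite_nat_set_iff_bounded)
  then have "\<forall>y. k \<le> y \<longrightarrow> y \<in> S" by (meson DiffI UNIV_I leD)
  then have "k \<in> S \<and> (\<forall>n. k + n \<in> S)" by simp
  then have "conductor S \<in> S \<and> (\<forall>n. conductor S + n \<in> S)"
    unfolding conductor_def by (rule LeastI)
  then show ?thesis using assms(2) by (metis le_add_diff_inverse)
qed

lemma finite_minimal_generators:
  assumes ns: "numerical_semigroup S"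
  shows "finite (minimal_generators S)"
proof -
  obtain s where s: "s \<in> S" "s \<noteq> 0"
  proof -
    have "\<not> {1::nat..} \<subseteq> UNIV - S"
      using ns finite_subset infinite_Ici unfolding numerical_semigroup_def by blast
    then show ?thesis using that by auto
  qed
  have "minimal_generators S \<subseteq> {..conductor S + s}"
  proof
    fix x assume x: "x \<in> minimal_generators S"
    show "x \<in> {..conductor S + s}"
    proof (rule ccontr)
      assume "x \<notin> {..conductor S + s}"
      then have "x - s \<in> S" "x - s \<noteq> 0" "s + (x - s) = x"
        using conductor_le_imp_mem[OF ns, of "x - s"] by auto
      then show False using x s unfolding minimal_generators_def by blast
    qed
  qed
  then show ?thesis by (rule finite_subset) simp
qed

lemma DA_mono: "A \<subseteq> B \<Longrightarrow> DA S A \<subseteq> DA S B"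
  by (auto simp: DA_def)

lemma shadow_subset: "shadow S m M \<subseteq> M"
  by (simp add: shadow_def)

lemma amenable_ge_min: "amenable S m r M \<Longrightarrow> x \<in> M \<Longrightarrow> m \<le> x"
  by (auto simp: amenable_def)

lemma Dx_amenable_descent:
  assumes ns: "numerical_semigroup S" and am: "amenable S m r M"
    and x: "x \<in> M" "m + Max (minimal_generators S) \<le> x"
    and a: "a \<in> Dx S x" "a < m"
  obtains x' where "x' \<in> M" "x' < x" "a \<in> Dx S x'"
proof -
  have aS: "a \<in> S" "a \<le> x" "x - a \<in> S" using a(1) by (auto simp: Dx_def)
  have "x - a \<noteq> 0" using a(2) amenable_ge_min[OF am x(1)] by auto
  then obtain g where g: "g \<in> minimal_generators S" "g \<le> x - a" "x - a - g \<in> S"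
    using minimal_generator_le[OF ns aS(3)] by auto
  have "g \<le> Max (minimal_generators S)" using g(1) finite_minimal_generators[OF ns] by auto
  then have x'm: "m \<le> x - g" using x(2) by auto
  have g0: "g \<noteq> 0" "g \<in> S" using g(1) by (auto simp: minimal_generators_def)
  have "conductor S \<le> m" using am by (auto simp: amenable_def)
  then have "x - g \<in> S" using conductor_le_imp_mem[OF ns] x'm by auto
  then have "x - g \<in> Dx S x \<inter> {m..}" using g0 g(2) aS x'm by (auto simp: Dx_def)
  then have "x - g \<in> M" using am x(1) by (auto simp: amenable_def)
  moreover have "x - g < x" using g0 g(2) aS by simp
  moreover have "a \<in> Dx S (x - g)"
  proof -
    have "x - g - a = x - a - g" by simp
    then show ?thesis using aS g by (simp add: Dx_def)
  qed
  ultimately show ?thesis by (rule that)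
qed

lemma Dx_amenable_below_min:
  assumes ns: "numerical_semigroup S" and am: "amenable S m r M"
  shows "x \<in> M \<Longrightarrow> a \<in> Dx S x \<Longrightarrow> a < m \<Longrightarrow> a \<in> DA S (shadow S m M)"
proof (induction x rule: less_induct)
  case (less x)
  show ?case
  proof (cases "x < m + Max (minimal_generators S)")
    case True
    then have "x \<in> shadow S m M"
      using less.prems(1) amenable_ge_min[OF am] by (auto simp: shadow_def)
    then show ?thesis using less.prems(2) by (auto simp: DA_def)
  next
    case False
    then obtain x' where "x' \<in> M" "x' < x" "a \<in> Dx S x'"
      using Dx_amenable_descent[OF ns am less.prems(1) _ less.prems(2,3)] by auto
    then show ?thesis using less.IH less.prems(3) by blast
  qed
qed

lemma DA_amenable_Int_lessThan:
  assumes ns: "numerical_semigroup S" and am: "amenable S m r M"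
  shows "DA S M \<inter> {..<m} = DA S (shadow S m M) \<inter> {..<m}"
proof -
  have "DA S (shadow S m M) \<subseteq> DA S M" by (rule DA_mono[OF shadow_subset])
  then show ?thesis using Dx_amenable_below_min[OF ns am] by (auto simp: DA_def)
qed

lemma card_DA_amenable:
  assumes ns: "numerical_semigroup S" and am: "amenable S m r M"
  shows "card (DA S M) = r + card (DA S M \<inter> {..<m})"
proof -
  have finM: "finite M" and cardM: "card M = r" and MS: "M \<subseteq> S"
    and closed: "\<forall>x\<in>M. Dx S x \<inter> {m..} \<subseteq> M"
    using am by (auto simp: amenable_def)
  have "M \<subseteq> DA S M"
    using MS ns by (auto simp: DA_def Dx_def numerical_semigroup_def)
  moreover have "DA S M \<inter> {m..} \<subseteq> M" using closed by (auto simp: DA_def)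
  moreover have "M \<subseteq> {m..}" using amenable_ge_min[OF am] by auto
  ultimately have split: "DA S M = M \<union> (DA S M \<inter> {..<m})" by auto
  have "card (M \<union> (DA S M \<inter> {..<m})) = card M + card (DA S M \<inter> {..<m})"
    using finM \<open>M \<subseteq> {m..}\<close> by (intro card_Un_disjoint) auto
  then show ?thesis using split cardM by simp
qed

theorem corollary3p11:
  fixes S M N :: "nat set" and m r :: nat
  assumes "numerical_semigroup S"
    and "2 * conductor S - 1 \<le> m"
    and "amenable S m r M" and "amenable S m r N"
    and "shadow S m M \<subseteq> shadow S m N"
  shows "card (DA S M) \<le> card (DA S N)"
proof -
  have "DA S M \<inter> {..<m} = DA S (shadow S m M) \<inter> {..<m}"
    by (rule DA_amenable_Int_lessThan[OF assms(1,3)])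
  also have "\<dots> \<subseteq> DA S (shadow S m N) \<inter> {..<m}"
    using DA_mono[OF assms(5)] by blast
  also have "\<dots> = DA S N \<inter> {..<m}"
    by (rule DA_amenable_Int_lessThan[OF assms(1,4), symmetric])
  finally have "card (DA S M \<inter> {..<m}) \<le> card (DA S N \<inter> {..<m})"
    by (intro card_mono) auto
  then show ?thesis
    using card_DA_amenable[OF assms(1,3)] card_DA_amenable[OF assms(1,4)] by simp
qed

end
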